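(* Let $p$ be an integer such that $2p = q(q+1)$ for some integer $q$ with $q \neq 0$ and $q + 1 \neq 0$, and suppose $q$ cannot be written as $q_1(q_1+1)$ for an integer $q_1$. Then $3p^3$ is represented by the following two sums of three integer cubes: $$\{-p - 2p(1 + 1)\}^3 + \left\{p + 2p\left(1 + \frac{1}{2}\right)\right\}^3 + \left\{p + 2p\left(1 + \frac{1}{2}\right)\right\}^3 = 3p^3$$ and $$\left\{-p - 2p\left(q + \frac{1}{q}\right)\right\}^3 + \left\{p + 2p\left(q + \frac{1}{q+1}\right)\right\}^3 + \left\{p + 2p\left(\frac{1}{q} + \frac{q}{q+1}\right)\right\}^3 = 3p^3.$$ *)

theory Defs
  imports Complex_Main
begin

end

theory Submission
  imports Defs
begin

text \<open>Because \<open>2p = q(q+1)\<close>, the fractions cancel: \<open>2p/q = q+1\<close> and \<open>2p/(q+1) = q\<close>.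
  The second triple is therefore the integer triple \<open>(-p - 2pq - (q+1), p + 2pq + q, p + (q+1) + q\<^sup>2)\<close>,
  and its cube sum equals \<open>3p\<^sup>3\<close> by a polynomial identity modulo \<open>2p - q(q+1)\<close>.
  The first triple is \<open>(-5p, 4p, 4p)\<close>, which works since \<open>-125 + 64 + 64 = 3\<close>.\<close>

lemma cubes_minus_five_four_four:
  fixes p :: "'a::comm_ring_1"
  shows "(- 5 * p) ^ 3 + (4 * p) ^ 3 + (4 * p) ^ 3 = 3 * p ^ 3"
  by (simp add: power_mult_distrib algebra_simps)

lemma triangular_cubes_sum:
  fixes p q :: "'a::{idom, ring_char_0}"
  assumes "2 * p = q * (q + 1)"
  shows "(- p - 2 * p * q - (q + 1)) ^ 3 + (p + 2 * p * q + q) ^ 3 + (p + (q + 1) + q ^ 2) ^ 3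
           = 3 * p ^ 3"
  using assms by algebra

lemma triangular_divide_factors:
  fixes p q :: "'a::field"
  assumes "2 * p = q * (q + 1)" and "q \<noteq> 0" and "q + 1 \<noteq> 0"
  shows "2 * p / q = q + 1" and "2 * p / (q + 1) = q"
  using assms by (simp_all add: field_simps)

theorem lemma3p3:
  fixes p q :: int
  assumes hp: "2 * p = q * (q + 1)"
    and hq0: "q \<noteq> 0" and hq1: "q + 1 \<noteq> 0"
    and hnot: "\<not> (\<exists>q1::int. q = q1 * (q1 + 1))"
  defines "x1 \<equiv> - real_of_int p - 2 * real_of_int p * (1 + 1)"
    and "y1 \<equiv> real_of_int p + 2 * real_of_int p * (1 + 1 / 2)"
    and "z1 \<equiv> real_of_int p + 2 * real_of_int p * (1 + 1 / 2)"
    and "x2 \<equiv> - real_of_int p - 2 * real_of_int p * (real_of_int q + 1 / real_of_int q)"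
    and "y2 \<equiv> real_of_int p + 2 * real_of_int p * (real_of_int q + 1 / (real_of_int q + 1))"
    and "z2 \<equiv> real_of_int p + 2 * real_of_int p * (1 / real_of_int q + real_of_int q / (real_of_int q + 1))"
  shows "x1 \<in> \<int> \<and> y1 \<in> \<int> \<and> z1 \<in> \<int> \<and> x1 ^ 3 + y1 ^ 3 + z1 ^ 3 = 3 * real_of_int p ^ 3
       \<and> x2 \<in> \<int> \<and> y2 \<in> \<int> \<and> z2 \<in> \<int> \<and> x2 ^ 3 + y2 ^ 3 + z2 ^ 3 = 3 * real_of_int p ^ 3"
proof -
  let ?p = "real_of_int p" and ?q = "real_of_int q"
  have hp_real: "2 * ?p = ?q * (?q + 1)"
    using hp by (metis of_int_1 of_int_add of_int_mult of_int_numeral)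
  have "?q \<noteq> 0" and "?q + 1 \<noteq> 0"
    using hq0 hq1 by (metis of_int_eq_0_iff, metis of_int_1 of_int_add of_int_eq_0_iff)
  note cancel = triangular_divide_factors[OF hp_real this]
  have triple1: "x1 = - 5 * ?p" "y1 = 4 * ?p" "z1 = 4 * ?p"
    unfolding x1_def y1_def z1_def by simp_all
  have x2: "x2 = - ?p - 2 * ?p * ?q - 2 * ?p / ?q"
    and y2: "y2 = ?p + 2 * ?p * ?q + 2 * ?p / (?q + 1)"
    and z2: "z2 = ?p + 2 * ?p / ?q + 2 * ?p / (?q + 1) * ?q"
    unfolding x2_def y2_def z2_def by (simp_all add: algebra_simps)
  have triple2: "x2 = - ?p - 2 * ?p * ?q - (?q + 1)" "y2 = ?p + 2 * ?p * ?q + ?q"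
    "z2 = ?p + (?q + 1) + ?q ^ 2"
    unfolding x2 y2 z2 cancel by (simp_all add: power2_eq_square)
  show ?thesis
    unfolding triple1 triple2
    using cubes_minus_five_four_four[of ?p] triangular_cubes_sum[OF hp_real]
    by (simp add: Ints_diff Ints_add Ints_mult Ints_minus)
qed

end
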